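(* Let $0<q<1$ and let $s_1,\dots,s_m$ be positive integers with $s_1>1$. Then \[ \sum_{k=1}^m \zeta[s_1,\dots,s_{k-1},1+s_k,s_{k+1},\dots,s_m] = \sum_{k=1}^m \sum_{j=0}^{s_k-2}\zeta[s_1,\dots,s_{k-1},s_k-j,j+1,s_{k+1},\dots,s_m], \] where the inner sum on the right is zero if $s_k<2$.
   Context: Fix $0<q<1$. For real $x$, $[x]_q := (1-q^x)/(1-q)$. For positive integers $s_1,\dots,s_N$ with $s_1>1$, $\zeta[s_1,\dots,s_N] := \sum_{k_1>\cdots>k_N>0}\prod_{j=1}^N q^{(s_j-1)k_j}/[k_j]_q^{s_j}$ (sum over positive integers). *)

theory Defs
  imports "HOL-Analysis.Analysis"
begin

definition qint :: "real \<Rightarrow> real \<Rightarrow> real" where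
  "qint q x = (1 - q powr x) / (1 - q)"

definition mzv_idx :: "nat \<Rightarrow> nat list set" where
  "mzv_idx N = {ks. length ks = N \<and> sorted_wrt (>) ks \<and> (\<forall>k\<in>set ks. 0 < k)}"

definition qzeta :: "real \<Rightarrow> nat list \<Rightarrow> real" where
  "qzeta q s = (\<Sum>\<^sub>\<infinity> ks \<in> mzv_idx (length s).
      \<Prod>j<length s. q ^ ((s!j - 1) * ks!j) / (qint q (real (ks!j))) ^ (s!j))"

end

theory Submission
  imports Defs "HOL-Real_Asymp.Real_Asymp"
begin

text \<open>
  Cut every q-multiple zeta value off at k_1 < N and put w_k = q^k / [k]_q. The partial fraction
  identities (w_{x-c} - w_x) / [c]_q = w_{x-c} / [x]_q and
  q^x / [x]_q^2 = (w_c - w_x) (w_{x-c} - w_x), rational identities in q^c and q^{x-c}, collapse the inner sums of the right-hand side. An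
  induction on the depth then shows that the truncated left-hand side minus the truncated
  right-hand side is the truncated q-multiple zeta sum with every term weighted by
  w_{N-k_1} + ... + w_{N-1}. As w_e <= q^e and s_1 >= 2, this defect is O(N^{m+1} q^N), while the
  truncations converge to the q-multiple zeta values, so the untruncated defect vanishes.
\<close>

lemma sum_triangle_swap:
  "(\<Sum>x\<in>{1..<N}. \<Sum>c\<in>{1..<x}. h x c) = (\<Sum>c\<in>{1..<N}. \<Sum>x\<in>{Suc c..<N}. h x (c::nat))"
proof -
  have "(\<Sum>x\<in>{1..<N}. \<Sum>c\<in>{1..<x}. h x c) = (\<Sum>x\<in>{1..<N}. \<Sum>c\<in>{c\<in>{1..<N}. c < x}. h x c)"
    by (intro sum.cong) auto
  also have "\<dots> = (\<Sum>c\<in>{1..<N}. \<Sum>x\<in>{x\<in>{1..<N}. c < x}. h x c)"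
    by (rule sum.swap_restrict) auto
  also have "\<dots> = (\<Sum>c\<in>{1..<N}. \<Sum>x\<in>{Suc c..<N}. h x c)"
    by (intro sum.cong) auto
  finally show ?thesis .
qed

lemma sum_reflect: "(\<Sum>c\<in>{Suc y..<x}. f (x - c)) = sum f {1..<x - y}"
  by (rule sum.reindex_bij_witness[where i = "\<lambda>e. x - e" and j = "\<lambda>c. x - c"]) auto

lemma sum_shifted_diff:
  fixes f :: "nat \<Rightarrow> 'a::ab_group_add"
  assumes "0 < x" "x < N"
  shows "f x + sum f {1..<x} - (\<Sum>z\<in>{Suc x..<N}. f (z - x) - f z) = sum f {N - x..<N}"
proof -
  have shift: "(\<Sum>z\<in>{Suc x..<N}. f (z - x)) = sum f {1..<N - x}"
    by (rule sum.reindex_bij_witness[where i = "\<lambda>e. e + x" and j = "\<lambda>z. z - x"]) auto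
  have "f x + sum f {1..<x} = sum f {1..<Suc x}"
    using assms by (simp add: sum.atLeastLessThan_Suc add.commute)
  also have "\<dots> + sum f {Suc x..<N} = sum f {1..<N}"
    using assms by (intro sum.atLeastLessThan_concat) auto
  finally have "f x + sum f {1..<x} + sum f {Suc x..<N} = sum f {1..<N}" .
  moreover have "sum f {1..<N - x} + sum f {N - x..<N} = sum f {1..<N}"
    using assms by (intro sum.atLeastLessThan_concat) auto
  ultimately show ?thesis
    by (simp add: sum_subtractf shift algebra_simps)
qed

lemma tendsto_sum_exhaustion_nonneg:
  fixes f :: "'a \<Rightarrow> real" and F :: "nat \<Rightarrow> 'a set"
  assumes nonneg: "\<And>x. x \<in> A \<Longrightarrow> 0 \<le> f x"
    and F: "\<And>N. finite (F N)" "\<And>N. F N \<subseteq> A" "mono F"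
    and exhaust: "\<And>X. finite X \<Longrightarrow> X \<subseteq> A \<Longrightarrow> \<exists>N. X \<subseteq> F N"
    and bound: "\<And>N. sum f (F N) \<le> B"
  shows "(\<lambda>N. sum f (F N)) \<longlonglongrightarrow> infsum f A"
proof -
  have "f summable_on A"
  proof (rule nonneg_bdd_above_summable_on[OF nonneg bdd_aboveI])
    fix y assume "y \<in> sum f ` {X. X \<subseteq> A \<and> finite X}"
    then obtain X where X: "X \<subseteq> A" "finite X" "y = sum f X" by auto
    then obtain N where "X \<subseteq> F N" using exhaust by blast
    then have "y \<le> sum f (F N)" using X F(1) F(2)[of N] nonneg by (auto intro!: sum_mono2)
    then show "y \<le> B" using bound order_trans by blast
  qed
  then have "(sum f \<longlongrightarrow> infsum f A) (finite_subsets_at_top A)"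
    by (simp add: has_sum_def summable_iff_has_sum_infsum)
  moreover have "filterlim F (finite_subsets_at_top A) sequentially"
    unfolding filterlim_finite_subsets_at_top
  proof (intro allI impI)
    fix X assume "finite X \<and> X \<subseteq> A"
    then obtain N where N: "X \<subseteq> F N" using exhaust by blast
    show "\<forall>\<^sub>F n in sequentially. finite (F n) \<and> X \<subseteq> F n \<and> F n \<subseteq> A"
      using eventually_ge_at_top[of N]
    proof eventually_elim
      case (elim n)
      then show ?case using N F(1,2) monoD[OF F(3) elim] by blast
    qed
  qed
  ultimately show ?thesis by (rule filterlim_compose)
qed

lemma summable_power_mult_geometric:
  fixes r :: real
  assumes "0 < r" "r < 1"
  shows "summable (\<lambda>n. real n ^ m * r ^ n)"
proof (rule summable_comparison_test_bigo)
  show "summable (\<lambda>n. norm (inverse (real n ^ 2)))"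
    using inverse_power_summable[of 2] by simp
  show "(\<lambda>n. real n ^ m * r ^ n) \<in> O(\<lambda>n. inverse (real n ^ 2))"
    using assms by real_asymp
qed

section \<open>q-numbers and partial fractions\<close>

lemma qint_of_nat: "0 < q \<Longrightarrow> qint q (real n) = (1 - q ^ n) / (1 - q)"
  by (simp add: qint_def powr_realpow)

lemma power_ne_1_real: "0 < (q::real) \<Longrightarrow> q \<noteq> 1 \<Longrightarrow> 0 < k \<Longrightarrow> q ^ k \<noteq> 1"
  using power_eq_1_iff[of q k] by auto

definition qzeta_factor :: "real \<Rightarrow> nat \<Rightarrow> nat \<Rightarrow> real" where
  "qzeta_factor q a k = q ^ ((a - 1) * k) / qint q (real k) ^ a"

text \<open>Since \<open>1 / [k]\<^sub>q = (1 - q) + qratio q k\<close>, partial fractions in \<open>1 / [k]\<^sub>q\<close> are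
  differences of \<open>qratio\<close>.\<close>

definition qratio :: "real \<Rightarrow> nat \<Rightarrow> real" where
  "qratio q k = q ^ k / qint q (real k)"

lemma qratio_eq: "0 < q \<Longrightarrow> qratio q k = (1 - q) * q ^ k / (1 - q ^ k)"
  by (simp add: qratio_def qint_of_nat)

lemma qzeta_factor_1: "0 < q \<Longrightarrow> qzeta_factor q 1 k = (1 - q) / (1 - q ^ k)"
  by (simp add: qzeta_factor_def qint_of_nat)

lemma qzeta_factor_Suc: "0 < a \<Longrightarrow> qzeta_factor q (Suc a) k = qratio q k * qzeta_factor q a k"
  by (cases a) (simp_all add: qzeta_factor_def qratio_def power_add mult.commute)

context
  fixes q :: real
  assumes q_pos: "0 < q" and q_ne_1: "q \<noteq> 1"
begin

lemma qpower_diff_split: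
  assumes "0 < c" "c < x"
  obtains u v where "q ^ c = u" "q ^ (x - c) = v" "q ^ x = u * v" "u \<noteq> 1" "v \<noteq> 1" "u * v \<noteq> 1"
proof
  show "q ^ x = q ^ c * q ^ (x - c)" using assms by (simp flip: power_add)
  then show "q ^ c \<noteq> 1" "q ^ (x - c) \<noteq> 1" "q ^ c * q ^ (x - c) \<noteq> 1"
    using power_ne_1_real[OF q_pos q_ne_1] assms by auto
qed auto

lemma partial_fraction_qzeta_factor_1:
  assumes "0 < c" "c < x"
  shows "qzeta_factor q 1 c * (qratio q (x - c) - qratio q x) =
    qzeta_factor q 1 x * qratio q (x - c)"
proof -
  obtain u v where uv: "q ^ c = u" "q ^ (x - c) = v" "q ^ x = u * v" "u \<noteq> 1" "v \<noteq> 1" "u * v \<noteq> 1"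
    using qpower_diff_split[OF assms] .
  show ?thesis
    unfolding qzeta_factor_1[OF q_pos] qratio_eq[OF q_pos] uv(1-3)
    using uv(4-6) q_ne_1 by (simp add: divide_simps) algebra
qed

lemma partial_fraction_qzeta_factor_2:
  assumes "0 < c" "c < x"
  shows "qratio q x * qzeta_factor q 1 x =
    (qratio q c - qratio q x) * (qratio q (x - c) - qratio q x)"
proof -
  obtain u v where uv: "q ^ c = u" "q ^ (x - c) = v" "q ^ x = u * v" "u \<noteq> 1" "v \<noteq> 1" "u * v \<noteq> 1"
    using qpower_diff_split[OF assms] .
  show ?thesis
    unfolding qzeta_factor_1[OF q_pos] qratio_eq[OF q_pos] uv(1-3)
    using uv(4-6) q_ne_1 by (simp add: divide_simps) algebra
qed

lemma qzeta_factor_convolution: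
  assumes "0 < c" "c < x"
  shows "(\<Sum>j<m. qzeta_factor q (Suc m - j) x * qzeta_factor q (j + 1) c) =
    qzeta_factor q (Suc m) c * (qratio q (x - c) - qratio q x)
      - qzeta_factor q (Suc m) x * qratio q (x - c)"
proof (induction m)
  case 0
  show ?case using partial_fraction_qzeta_factor_1[OF assms] by simp
next
  case (Suc m)
  let ?f = "qzeta_factor q" and ?w = "qratio q"
  have "?f (Suc (Suc m) - j) x = ?w x * ?f (Suc m - j) x" if "j < m" for j
    using that by (simp add: Suc_diff_le qzeta_factor_Suc)
  then have "(\<Sum>j<Suc m. ?f (Suc (Suc m) - j) x * ?f (j + 1) c) =
      ?w x * (\<Sum>j<m. ?f (Suc m - j) x * ?f (j + 1) c) + ?w x * ?f 1 x * ?f (Suc m) c"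
    by (simp add: sum_distrib_left qzeta_factor_Suc numeral_2_eq_2 mult.assoc)
  also have "\<dots> = ?f (Suc (Suc m)) c * (?w (x - c) - ?w x) - ?f (Suc (Suc m)) x * ?w (x - c)"
    unfolding Suc.IH partial_fraction_qzeta_factor_2[OF assms] qzeta_factor_Suc[OF zero_less_Suc]
    by (simp add: algebra_simps)
  finally show ?case .
qed

end

section \<open>Truncated q-multiple zeta values\<close>

fun qzeta_trunc :: "real \<Rightarrow> nat list \<Rightarrow> nat \<Rightarrow> real" where
  "qzeta_trunc q [] N = 1"
| "qzeta_trunc q (a # s) N = (\<Sum>k\<in>{1..<N}. qzeta_factor q a k * qzeta_trunc q s k)"

definition qzeta_summand :: "real \<Rightarrow> nat list \<Rightarrow> nat list \<Rightarrow> real" where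
  "qzeta_summand q s ks = (\<Prod>j<length s. qzeta_factor q (s!j) (ks!j))"

definition mzv_idx_below :: "nat \<Rightarrow> nat \<Rightarrow> nat list set" where
  "mzv_idx_below n N = {ks \<in> mzv_idx n. \<forall>k\<in>set ks. k < N}"

lemma qzeta_eq_infsum: "qzeta q s = infsum (qzeta_summand q s) (mzv_idx (length s))"
  unfolding qzeta_def qzeta_summand_def[abs_def] qzeta_factor_def ..

lemma qzeta_summand_Cons:
  "qzeta_summand q (a # s) (k # ks) = qzeta_factor q a k * qzeta_summand q s ks"
  unfolding qzeta_summand_def by (simp add: prod.lessThan_Suc_shift del: prod.lessThan_Suc)

lemma mzv_idx_below_0: "mzv_idx_below 0 N = {[]}"
  by (auto simp: mzv_idx_below_def mzv_idx_def)

lemma mzv_idx_below_Suc: "mzv_idx_below (Suc n) N = (\<Union>k\<in>{1..<N}. (#) k ` mzv_idx_below n k)"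
proof (intro equalityI subsetI)
  fix ks assume ks: "ks \<in> mzv_idx_below (Suc n) N"
  then obtain k ks' where "ks = k # ks'" by (cases ks) (auto simp: mzv_idx_below_def mzv_idx_def)
  with ks show "ks \<in> (\<Union>k\<in>{1..<N}. (#) k ` mzv_idx_below n k)"
    by (auto simp: mzv_idx_below_def mzv_idx_def)
qed (auto simp: mzv_idx_below_def mzv_idx_def, meson less_trans)

lemma mzv_idx_below_subset: "mzv_idx_below n N \<subseteq> mzv_idx n"
  by (auto simp: mzv_idx_below_def)

lemma finite_mzv_idx_below: "finite (mzv_idx_below n N)"
proof (rule finite_subset)
  show "mzv_idx_below n N \<subseteq> {ks. set ks \<subseteq> {..<N} \<and> length ks = n}"
    by (auto simp: mzv_idx_below_def mzv_idx_def)
qed (simp add: finite_lists_length_eq)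

lemma mono_mzv_idx_below: "mono (mzv_idx_below n)"
  by (auto simp: mono_def mzv_idx_below_def)

lemma finite_subset_mzv_idx_below:
  assumes "finite X" "X \<subseteq> mzv_idx n"
  shows "\<exists>N. X \<subseteq> mzv_idx_below n N"
proof
  have "finite (\<Union>ks\<in>X. set ks)" using assms(1) by simp
  then show "X \<subseteq> mzv_idx_below n (Suc (Max (\<Union>ks\<in>X. set ks)))"
    using assms(2) by (auto simp: mzv_idx_below_def less_Suc_eq_le intro!: Max_ge)
qed

lemma qzeta_trunc_eq_sum: "qzeta_trunc q s N = sum (qzeta_summand q s) (mzv_idx_below (length s) N)"
proof (induction s arbitrary: N)
  case Nil
  then show ?case by (simp add: mzv_idx_below_0 qzeta_summand_def)
next
  case (Cons a s)
  have "sum (qzeta_summand q (a # s)) (mzv_idx_below (length (a # s)) N) =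
      (\<Sum>k\<in>{1..<N}. sum (qzeta_summand q (a # s)) ((#) k ` mzv_idx_below (length s) k))"
    unfolding length_Cons mzv_idx_below_Suc
    by (rule sum.UNION_disjoint) (auto simp: finite_mzv_idx_below)
  also have "\<dots> = qzeta_trunc q (a # s) N"
    by (simp add: sum.reindex qzeta_summand_Cons Cons.IH sum_distrib_left)
  finally show ?case ..
qed

lemma qzeta_trunc_qratio_convolution:
  "(\<Sum>c\<in>{1..<x}. qratio q (x - c) * qzeta_trunc q (b # s) c) =
    (\<Sum>y\<in>{1..<x}. qzeta_factor q b y * qzeta_trunc q s y * sum (qratio q) {1..<x - y})"
proof -
  have "(\<Sum>c\<in>{1..<x}. qratio q (x - c) * qzeta_trunc q (b # s) c) =
      (\<Sum>y\<in>{1..<x}. \<Sum>c\<in>{Suc y..<x}. qratio q (x - c) * (qzeta_factor q b y * qzeta_trunc q s y))"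
    unfolding sum_triangle_swap[symmetric] by (simp add: sum_distrib_left)
  then show ?thesis by (simp add: sum_distrib_right[symmetric] sum_reflect mult.commute)
qed

section \<open>The Hoffman defect of the truncations\<close>

text \<open>Both sides of the relation are taken for an arbitrary valuation \<open>Z\<close> of index lists, so
  that they apply to \<open>qzeta q\<close> and to its truncations alike.\<close>

definition hoffman_lhs :: "(nat list \<Rightarrow> real) \<Rightarrow> nat list \<Rightarrow> real" where
  "hoffman_lhs Z s = (\<Sum>k<length s. Z (s[k := 1 + s!k]))"

definition hoffman_rhs :: "(nat list \<Rightarrow> real) \<Rightarrow> nat list \<Rightarrow> real" where
  "hoffman_rhs Z s =
     (\<Sum>k<length s. \<Sum>j<s!k - 1. Z (take k s @ [s!k - j, j + 1] @ drop (Suc k) s))"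

definition hoffman_defect :: "(nat list \<Rightarrow> real) \<Rightarrow> nat list \<Rightarrow> real" where
  "hoffman_defect Z s = hoffman_lhs Z s - hoffman_rhs Z s"

lemma hoffman_defect_Nil: "hoffman_defect Z [] = 0"
  by (simp add: hoffman_defect_def hoffman_lhs_def hoffman_rhs_def)

lemma hoffman_defect_Cons:
  "hoffman_defect Z (a # s) =
     Z ((1 + a) # s) - (\<Sum>j<a - 1. Z ((a - j) # (j + 1) # s)) + hoffman_defect (\<lambda>t. Z (a # t)) s"
  unfolding hoffman_defect_def hoffman_lhs_def hoffman_rhs_def
  by (simp add: sum.lessThan_Suc_shift del: sum.lessThan_Suc)

lemma hoffman_defect_sum:
  "hoffman_defect (\<lambda>t. \<Sum>x\<in>A. f x * Z x t) s = (\<Sum>x\<in>A. f x * hoffman_defect (Z x) s)"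
proof -
  have lhs: "hoffman_lhs (\<lambda>t. \<Sum>x\<in>A. f x * Z x t) s = (\<Sum>x\<in>A. f x * hoffman_lhs (Z x) s)"
    unfolding hoffman_lhs_def sum_distrib_left by (rule sum.swap)
  have "hoffman_rhs (\<lambda>t. \<Sum>x\<in>A. f x * Z x t) s = (\<Sum>k<length s. \<Sum>x\<in>A. \<Sum>j<s!k - 1.
          f x * Z x (take k s @ [s!k - j, j + 1] @ drop (Suc k) s))"
    unfolding hoffman_rhs_def by (intro sum.cong refl) (rule sum.swap)
  also have "\<dots> = (\<Sum>x\<in>A. f x * hoffman_rhs (Z x) s)"
    unfolding hoffman_rhs_def sum_distrib_left by (rule sum.swap)
  finally show ?thesis
    using lhs by (simp add: hoffman_defect_def sum_subtractf right_diff_distrib)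
qed

lemma tendsto_hoffman_defect:
  "(\<And>t. (\<lambda>N. Z N t) \<longlonglongrightarrow> L t) \<Longrightarrow> (\<lambda>N. hoffman_defect (Z N) s) \<longlonglongrightarrow> hoffman_defect L s"
  unfolding hoffman_defect_def hoffman_lhs_def hoffman_rhs_def by (intro tendsto_intros)

context
  fixes q :: real
  assumes q_pos: "0 < q" and q_ne_1: "q \<noteq> 1"
begin

lemma sum_qzeta_trunc_split_head:
  assumes "0 < a"
  shows "(\<Sum>j<a - 1. qzeta_trunc q ((a - j) # (j + 1) # s) N) =
    (\<Sum>x\<in>{1..<N}. qzeta_factor q a x * qzeta_trunc q s x *
        (\<Sum>z\<in>{Suc x..<N}. qratio q (z - x) - qratio q z))
    - (\<Sum>x\<in>{1..<N}. qzeta_factor q a x * (\<Sum>c\<in>{1..<x}. qratio q (x - c) * qzeta_trunc q s c))"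
proof -
  obtain m where a: "a = Suc m" using assms by (cases a) auto
  let ?f = "qzeta_factor q" and ?w = "qratio q" and ?Z = "qzeta_trunc q s"
  have "(\<Sum>j<a - 1. qzeta_trunc q ((a - j) # (j + 1) # s) N) =
      (\<Sum>x\<in>{1..<N}. \<Sum>c\<in>{1..<x}. (\<Sum>j<m. ?f (Suc m - j) x * ?f (j + 1) c) * ?Z c)"
    unfolding a by (simp add: sum_distrib_left sum_distrib_right mult.assoc sum.swap[of _ "{..<m}"])
  also have "\<dots> = (\<Sum>x\<in>{1..<N}. \<Sum>c\<in>{1..<x}.
      (?f a c * (?w (x - c) - ?w x) - ?f a x * ?w (x - c)) * ?Z c)"
    unfolding a by (intro sum.cong refl, subst qzeta_factor_convolution[OF q_pos q_ne_1]) auto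
  also have "\<dots> = (\<Sum>x\<in>{1..<N}. \<Sum>c\<in>{1..<x}. ?f a c * ?Z c * (?w (x - c) - ?w x))
      - (\<Sum>x\<in>{1..<N}. ?f a x * (\<Sum>c\<in>{1..<x}. ?w (x - c) * ?Z c))"
    by (simp add: sum_subtractf sum_distrib_left sum.distrib algebra_simps)
  also have "(\<Sum>x\<in>{1..<N}. \<Sum>c\<in>{1..<x}. ?f a c * ?Z c * (?w (x - c) - ?w x)) =
      (\<Sum>x\<in>{1..<N}. ?f a x * ?Z x * (\<Sum>z\<in>{Suc x..<N}. ?w (z - x) - ?w z))"
    unfolding sum_triangle_swap by (simp add: sum_distrib_left)
  finally show ?thesis .
qed

text \<open>The second sum of \<open>sum_qzeta_trunc_split_head\<close> does not cancel on its own; added to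
  the defect of the tail it has the closed form of \<open>hoffman_defect_qzeta_trunc_invariant\<close>, which
  is the statement the induction on \<open>s\<close> actually carries.\<close>

lemma hoffman_defect_qzeta_trunc_Cons_step:
  assumes "0 < a"
    and inv: "\<And>x. hoffman_defect (\<lambda>t. qzeta_trunc q t x) s
       + (\<Sum>c\<in>{1..<x}. qratio q (x - c) * qzeta_trunc q s c)
       = qzeta_trunc q s x * sum (qratio q) {1..<x}"
  shows "hoffman_defect (\<lambda>t. qzeta_trunc q t N) (a # s) =
    (\<Sum>x\<in>{1..<N}. qzeta_factor q a x * qzeta_trunc q s x * sum (qratio q) {N - x..<N})"
proof -
  let ?f = "qzeta_factor q a" and ?w = "qratio q" and ?Z = "qzeta_trunc q s"
  have tail: "hoffman_defect (\<lambda>t. qzeta_trunc q (a # t) N) s =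
      (\<Sum>x\<in>{1..<N}. ?f x * hoffman_defect (\<lambda>t. qzeta_trunc q t x) s)"
    using hoffman_defect_sum[where f = ?f and A = "{1..<N}" and Z = "\<lambda>x t. qzeta_trunc q t x"]
    by simp
  have head: "qzeta_trunc q ((1 + a) # s) N = (\<Sum>x\<in>{1..<N}. ?f x * (?w x * ?Z x))"
    using qzeta_factor_Suc[OF assms(1)] by (simp add: mult_ac)
  have "hoffman_defect (\<lambda>t. qzeta_trunc q t N) (a # s) =
      (\<Sum>x\<in>{1..<N}. ?f x * (?w x * ?Z x - ?Z x * (\<Sum>z\<in>{Suc x..<N}. ?w (z - x) - ?w z)
        + (hoffman_defect (\<lambda>t. qzeta_trunc q t x) s + (\<Sum>c\<in>{1..<x}. ?w (x - c) * ?Z c))))"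
    unfolding hoffman_defect_Cons tail head sum_qzeta_trunc_split_head[OF assms(1)]
    by (simp add: sum.distrib sum_subtractf algebra_simps)
  also have "\<dots> = (\<Sum>x\<in>{1..<N}.
      ?f x * ?Z x * (?w x + sum ?w {1..<x} - (\<Sum>z\<in>{Suc x..<N}. ?w (z - x) - ?w z)))"
    unfolding inv by (simp add: algebra_simps)
  also have "\<dots> = (\<Sum>x\<in>{1..<N}. ?f x * ?Z x * sum ?w {N - x..<N})"
    by (intro sum.cong refl, subst sum_shifted_diff) auto
  finally show ?thesis .
qed

lemma hoffman_defect_qzeta_trunc_invariant:
  assumes "\<forall>b\<in>set s. 0 < b"
  shows "hoffman_defect (\<lambda>t. qzeta_trunc q t x) s
      + (\<Sum>c\<in>{1..<x}. qratio q (x - c) * qzeta_trunc q s c)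
    = qzeta_trunc q s x * sum (qratio q) {1..<x}"
  using assms
proof (induction s arbitrary: x)
  case Nil
  show ?case using sum_reflect[where y = 0 and f = "qratio q"] by (simp add: hoffman_defect_Nil)
next
  case (Cons b s)
  have "hoffman_defect (\<lambda>t. qzeta_trunc q t x) (b # s) =
      (\<Sum>y\<in>{1..<x}. qzeta_factor q b y * qzeta_trunc q s y * sum (qratio q) {x - y..<x})"
    using Cons by (intro hoffman_defect_qzeta_trunc_Cons_step) auto
  moreover have "sum (qratio q) {x - y..<x} + sum (qratio q) {1..<x - y} = sum (qratio q) {1..<x}"
    if "y \<in> {1..<x}" for y
    using that by (subst add.commute, intro sum.atLeastLessThan_concat) auto
  ultimately show ?case
    unfolding qzeta_trunc_qratio_convolution
    by (simp add: sum.distrib[symmetric] distrib_left[symmetric] sum_distrib_right)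
qed

theorem hoffman_defect_qzeta_trunc:
  assumes "0 < a" "\<forall>b\<in>set s. 0 < b"
  shows "hoffman_defect (\<lambda>t. qzeta_trunc q t N) (a # s) =
    (\<Sum>x\<in>{1..<N}. qzeta_factor q a x * qzeta_trunc q s x * sum (qratio q) {N - x..<N})"
  using assms by (intro hoffman_defect_qzeta_trunc_Cons_step hoffman_defect_qzeta_trunc_invariant)

end

section \<open>Convergence\<close>

context
  fixes q :: real
  assumes q_pos: "0 < q" and q_lt_1: "q < 1"
begin

lemma qint_ge_1: "0 < k \<Longrightarrow> 1 \<le> qint q (real k)"
  using power_decreasing[of 1 k q] q_pos q_lt_1 by (simp add: qint_of_nat field_simps)

lemma qratio_nonneg: "0 \<le> qratio q k"
  using q_pos q_lt_1 by (simp add: qratio_eq power_le_one)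

lemma qratio_le_power: "0 < k \<Longrightarrow> qratio q k \<le> q ^ k"
  unfolding qratio_def using qint_ge_1 q_pos by (simp add: divide_le_eq mult_le_cancel_left1)

lemma qzeta_factor_nonneg: "0 \<le> qzeta_factor q a k"
  using q_pos q_lt_1 by (simp add: qzeta_factor_def qint_of_nat power_le_one)

lemma qzeta_factor_le:
  assumes "0 < k"
  shows "qzeta_factor q a k \<le> q ^ ((a - 1) * k)"
  unfolding qzeta_factor_def using qint_ge_1[OF assms] q_pos
  by (simp add: divide_le_eq mult_le_cancel_left1 one_le_power)

lemma qzeta_factor_le_1: "0 < k \<Longrightarrow> qzeta_factor q a k \<le> 1"
  using qzeta_factor_le[of k a] power_le_one[of q "(a - 1) * k"] q_pos q_lt_1 by linarith

lemma qzeta_factor_le_power: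
  assumes "2 \<le> a" "0 < k"
  shows "qzeta_factor q a k \<le> q ^ k"
proof -
  have "q ^ ((a - 1) * k) \<le> q ^ k"
    using assms q_pos q_lt_1 by (intro power_decreasing) auto
  then show ?thesis using qzeta_factor_le[OF assms(2), of a] by linarith
qed

lemma qzeta_trunc_nonneg: "0 \<le> qzeta_trunc q t N"
  by (induction t arbitrary: N) (auto intro!: sum_nonneg mult_nonneg_nonneg qzeta_factor_nonneg)

lemma qzeta_trunc_le_power: "qzeta_trunc q t N \<le> real N ^ length t"
proof (induction t arbitrary: N)
  case (Cons b t)
  have "qzeta_trunc q (b # t) N \<le> (\<Sum>k\<in>{1..<N}. real N ^ length t)"
  proof (unfold qzeta_trunc.simps, rule sum_mono)
    fix k assume k: "k \<in> {1..<N}"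
    have "qzeta_factor q b k * qzeta_trunc q t k \<le> 1 * real k ^ length t"
      using k Cons.IH[of k] qzeta_factor_le_1 qzeta_factor_nonneg qzeta_trunc_nonneg
      by (intro mult_mono) auto
    also have "\<dots> \<le> real N ^ length t" using k by (simp add: power_mono)
    finally show "qzeta_factor q b k * qzeta_trunc q t k \<le> real N ^ length t" .
  qed
  also have "\<dots> \<le> real N * real N ^ length t" by (simp add: mult_right_mono)
  finally show ?case by simp
qed simp

lemma sum_qratio_tail_le:
  assumes "x < N"
  shows "sum (qratio q) {N - x..<N} \<le> real x * q ^ (N - x)"
proof -
  have "sum (qratio q) {N - x..<N} \<le> (\<Sum>e\<in>{N - x..<N}. q ^ (N - x))"
  proof (rule sum_mono)
    fix e assume e: "e \<in> {N - x..<N}"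
    then have "qratio q e \<le> q ^ e" using assms by (intro qratio_le_power) auto
    also have "\<dots> \<le> q ^ (N - x)" using e q_pos q_lt_1 by (intro power_decreasing) auto
    finally show "qratio q e \<le> q ^ (N - x)" .
  qed
  then show ?thesis using assms by simp
qed

lemma hoffman_defect_qzeta_trunc_bounds:
  assumes "2 \<le> a" "\<forall>b\<in>set s. 0 < b"
  shows "0 \<le> hoffman_defect (\<lambda>t. qzeta_trunc q t N) (a # s)"
    and "hoffman_defect (\<lambda>t. qzeta_trunc q t N) (a # s) \<le> real N ^ (length s + 2) * q ^ N"
proof -
  let ?term = "\<lambda>x. qzeta_factor q a x * qzeta_trunc q s x * sum (qratio q) {N - x..<N}"
  have defect: "hoffman_defect (\<lambda>t. qzeta_trunc q t N) (a # s) = sum ?term {1..<N}"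
    using assms q_pos q_lt_1 by (intro hoffman_defect_qzeta_trunc) auto
  show "0 \<le> hoffman_defect (\<lambda>t. qzeta_trunc q t N) (a # s)"
    unfolding defect
    by (intro sum_nonneg mult_nonneg_nonneg qzeta_factor_nonneg qzeta_trunc_nonneg qratio_nonneg)
  have "?term x \<le> real N ^ (length s + 1) * q ^ N" if x: "x \<in> {1..<N}" for x
  proof -
    have "?term x \<le> q ^ x * real N ^ length s * (real N * q ^ (N - x))"
    proof (intro mult_mono)
      show "qzeta_factor q a x \<le> q ^ x" using x assms by (intro qzeta_factor_le_power) auto
      have "real x ^ length s \<le> real N ^ length s" using x by (intro power_mono) auto
      then show "qzeta_trunc q s x \<le> real N ^ length s"
        using qzeta_trunc_le_power[of s x] by linarith
      have "real x * q ^ (N - x) \<le> real N * q ^ (N - x)"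
        using x q_pos by (intro mult_right_mono) auto
      then show "sum (qratio q) {N - x..<N} \<le> real N * q ^ (N - x)"
        using sum_qratio_tail_le[of x N] x by simp
    qed (use q_pos in \<open>auto intro!: mult_nonneg_nonneg sum_nonneg qratio_nonneg
        qzeta_trunc_nonneg qzeta_factor_nonneg\<close>)
    also have "\<dots> = real N ^ (length s + 1) * q ^ N"
      using x by (simp add: mult_ac flip: power_add)
    finally show ?thesis .
  qed
  then have "sum ?term {1..<N} \<le> real (N - 1) * (real N ^ (length s + 1) * q ^ N)"
    using sum_bounded_above[of "{1..<N}" ?term] by simp
  also have "\<dots> \<le> real N * (real N ^ (length s + 1) * q ^ N)"
    using q_pos by (intro mult_right_mono) auto
  finally have "sum ?term {1..<N} \<le> real N * (real N ^ (length s + 1) * q ^ N)" .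
  then show "hoffman_defect (\<lambda>t. qzeta_trunc q t N) (a # s) \<le> real N ^ (length s + 2) * q ^ N"
    unfolding defect by simp
qed

lemma hoffman_defect_qzeta_trunc_tendsto_0:
  assumes "2 \<le> a" "\<forall>b\<in>set s. 0 < b"
  shows "(\<lambda>N. hoffman_defect (\<lambda>t. qzeta_trunc q t N) (a # s)) \<longlonglongrightarrow> 0"
proof (rule tendsto_sandwich[OF _ _ tendsto_const])
  show "(\<lambda>N. real N ^ (length s + 2) * q ^ N) \<longlonglongrightarrow> 0"
    using q_pos q_lt_1 by real_asymp
qed (use hoffman_defect_qzeta_trunc_bounds[OF assms] in auto)

lemma qzeta_trunc_Cons_le_suminf:
  assumes "2 \<le> a"
  shows "qzeta_trunc q (a # t) N \<le> (\<Sum>n. real n ^ length t * q ^ n)"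
proof -
  have "qzeta_trunc q (a # t) N \<le> (\<Sum>k\<in>{1..<N}. real k ^ length t * q ^ k)"
  proof (unfold qzeta_trunc.simps, rule sum_mono)
    fix k assume "k \<in> {1..<N}"
    then have "qzeta_factor q a k * qzeta_trunc q t k \<le> q ^ k * real k ^ length t"
      using assms qzeta_factor_le_power qzeta_trunc_le_power qzeta_trunc_nonneg q_pos
      by (intro mult_mono) auto
    then show "qzeta_factor q a k * qzeta_trunc q t k \<le> real k ^ length t * q ^ k"
      by (simp add: mult.commute)
  qed
  also have "\<dots> \<le> (\<Sum>n. real n ^ length t * q ^ n)"
    using summable_power_mult_geometric[OF q_pos q_lt_1] q_pos by (intro sum_le_suminf) auto
  finally show ?thesis .
qed

lemma qzeta_trunc_tendsto:
  assumes "2 \<le> a"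
  shows "(\<lambda>N. qzeta_trunc q (a # t) N) \<longlonglongrightarrow> qzeta q (a # t)"
  unfolding qzeta_trunc_eq_sum qzeta_eq_infsum
proof (rule tendsto_sum_exhaustion_nonneg)
  show "0 \<le> qzeta_summand q (a # t) ks" for ks
    unfolding qzeta_summand_def by (intro prod_nonneg) (simp add: qzeta_factor_nonneg)
  show "sum (qzeta_summand q (a # t)) (mzv_idx_below (length (a # t)) N)
      \<le> (\<Sum>n. real n ^ length t * q ^ n)" for N
    using qzeta_trunc_Cons_le_suminf[OF assms] by (simp add: qzeta_trunc_eq_sum)
qed (simp_all add: finite_mzv_idx_below mzv_idx_below_subset mono_mzv_idx_below
    finite_subset_mzv_idx_below)

lemma hoffman_defect_qzeta_trunc_tendsto:
  assumes "2 \<le> a"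
  shows "(\<lambda>N. hoffman_defect (\<lambda>t. qzeta_trunc q t N) (a # s)) \<longlonglongrightarrow> hoffman_defect (qzeta q) (a # s)"
  unfolding hoffman_defect_Cons using assms
  by (intro tendsto_intros tendsto_hoffman_defect qzeta_trunc_tendsto) auto

end

theorem corollary4p3:
  fixes q :: real and s :: "nat list"
  assumes "0 < q" "q < 1"
    and "s \<noteq> []" "\<forall>x\<in>set s. 0 < x" "s!0 > 1"
  shows "(\<Sum>k<length s. qzeta q (s[k := 1 + s!k]))
       = (\<Sum>k<length s. \<Sum>j<s!k - 1.
            qzeta q (take k s @ [s!k - j, j + 1] @ drop (Suc k) s))"
proof -
  obtain a s' where s: "s = a # s'" and a: "2 \<le> a" and s': "\<forall>b\<in>set s'. 0 < b"
    using assms(3-5) by (cases s) auto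
  have "(\<lambda>N. hoffman_defect (\<lambda>t. qzeta_trunc q t N) s) \<longlonglongrightarrow> hoffman_defect (qzeta q) s"
    unfolding s using assms(1,2) a by (rule hoffman_defect_qzeta_trunc_tendsto)
  moreover have "(\<lambda>N. hoffman_defect (\<lambda>t. qzeta_trunc q t N) s) \<longlonglongrightarrow> 0"
    unfolding s using assms(1,2) a s' by (rule hoffman_defect_qzeta_trunc_tendsto_0)
  ultimately have "hoffman_defect (qzeta q) s = 0"
    by (rule LIMSEQ_unique)
  then show ?thesis
    by (simp add: hoffman_defect_def hoffman_lhs_def hoffman_rhs_def)
qed

end
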